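(* Let $\Sigma=\{a,b\}$ and let $L_F:\Sigma^\omega\to\mathbb R$ be defined by $L_F(w)=0$ if $w$ contains infinitely many $a$'s and $L_F(w)=1$ otherwise. Then: (1) $L_F$ is the language of some automaton in NLimAvg; (2) $L_F$ is the language of some automaton in PosLimAvg; (3) $L_F$ is not the language of any automaton in AsLimAvg.
   Context: A probabilistic weighted automaton over a finite alphabet $\Sigma$ is a tuple $A=(Q,\rho_I,\Sigma,\delta,\gamma)$ where $Q$ is a finite set of states, $\rho_I$ is a probability distribution on $Q$, $\delta:Q\times\Sigma\to\mathcal D(Q)$ assigns to each state and letter a probability distribution on $Q$, and $\gamma:Q\times\Sigma\times Q\to\mathbb Q$ is a weight function. A run over an infinite word $w=\sigma_1\sigma_2\dots$ is a sequence $r=q_0\sigma_1q_1\sigma_2\dots$ with $\rho_I(q_0)>0$ and $\delta(q_i,\sigma_{i+1})(q_{i+1})>0$ for all $i$; its weight sequence is $\gamma(r)=v_0v_1\dots$ with $v_i=\gamma(q_i,\sigma_{i+1},q_{i+1})$. For each $w$, the probabilities of finite run prefixes induce a probability measure $\mathbb P^A$ on runs over $w$. With $\mathsf{LimAvg}(v)=\liminf_{n}\frac1n\sum_{i=0}^{n-1}v_i$: PosLimAvg automata define $L^{>0}_A(w)=\sup\{\eta\mid \mathbb P^A(\{r:\mathsf{LimAvg}(\gamma(r))\ge\eta\})>0\}$; AsLimAvg automata define $L^{=1}_A(w)=\sup\{\eta\mid \mathbb P^A(\{r:\mathsf{LimAvg}(\gamma(r))\ge\eta\})=1\}$; NLimAvg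 automata (non-probabilistic: initial states with $\rho_I(q)>0$, transitions with $\delta(q,\sigma)(q')>0$) define $L^{\max}_A(w)=\sup\{\mathsf{LimAvg}(\gamma(r))\mid r\text{ run over }w\}$. *)

theory Defs
  imports "HOL-Probability.Probability"
begin

text \<open>The alphabet Sigma = {a, b}. Infinite words are functions nat => letter;
  the word sigma_1 sigma_2 ... is represented by w with w i = sigma_(i+1).\<close>
datatype letter = La | Lb

text \<open>Probabilistic weighted automata. States are natural numbers drawn from a
  finite set Q (so that the class of all finite-state automata can be quantified over).\<close>
record pwa =
  states :: "nat set"
  init :: "nat pmf"
  trans :: "nat \<Rightarrow> letter \<Rightarrow> nat pmf"
  weight :: "nat \<Rightarrow> letter \<Rightarrow> nat \<Rightarrow> rat"

definition wf_pwa :: "pwa \<Rightarrow> bool" where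
  "wf_pwa A \<longleftrightarrow> finite (states A) \<and> set_pmf (init A) \<subseteq> states A \<and>
     (\<forall>q\<in>states A. \<forall>\<sigma>. set_pmf (trans A q \<sigma>) \<subseteq> states A)"

definition is_run :: "pwa \<Rightarrow> (nat \<Rightarrow> letter) \<Rightarrow> (nat \<Rightarrow> nat) \<Rightarrow> bool" where
  "is_run A w r \<longleftrightarrow> pmf (init A) (r 0) > 0 \<and>
     (\<forall>i. pmf (trans A (r i) (w i)) (r (Suc i)) > 0)"

definition run_space :: "(nat \<Rightarrow> nat) measure" where
  "run_space = PiM UNIV (\<lambda>_. count_space UNIV)"

definition prefix_prob :: "pwa \<Rightarrow> (nat \<Rightarrow> letter) \<Rightarrow> nat \<Rightarrow> (nat \<Rightarrow> nat) \<Rightarrow> real" where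
  "prefix_prob A w n r = pmf (init A) (r 0) * (\<Prod>i<n. pmf (trans A (r i) (w i)) (r (Suc i)))"

definition run_measure :: "pwa \<Rightarrow> (nat \<Rightarrow> letter) \<Rightarrow> (nat \<Rightarrow> nat) measure" where
  "run_measure A w = (THE M. sets M = sets run_space \<and> prob_space M \<and>
     (\<forall>n r. emeasure M {x \<in> space run_space. \<forall>i\<le>n. x i = r i} = ennreal (prefix_prob A w n r)))"

definition weights :: "pwa \<Rightarrow> (nat \<Rightarrow> letter) \<Rightarrow> (nat \<Rightarrow> nat) \<Rightarrow> nat \<Rightarrow> rat" where
  "weights A w r i = weight A (r i) (w i) (r (Suc i))"

definition LimAvg :: "(nat \<Rightarrow> rat) \<Rightarrow> ereal" where
  "LimAvg v = liminf (\<lambda>n. ereal (real_of_rat (\<Sum>i<n. v i) / real n))"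

definition L_pos :: "pwa \<Rightarrow> (nat \<Rightarrow> letter) \<Rightarrow> ereal" where
  "L_pos A w = Sup (ereal ` {\<eta>::real. emeasure (run_measure A w)
      {r \<in> space (run_measure A w). LimAvg (weights A w r) \<ge> ereal \<eta>} > 0})"

definition L_as :: "pwa \<Rightarrow> (nat \<Rightarrow> letter) \<Rightarrow> ereal" where
  "L_as A w = Sup (ereal ` {\<eta>::real. emeasure (run_measure A w)
      {r \<in> space (run_measure A w). LimAvg (weights A w r) \<ge> ereal \<eta>} = 1})"

definition L_max :: "pwa \<Rightarrow> (nat \<Rightarrow> letter) \<Rightarrow> ereal" where
  "L_max A w = Sup {LimAvg (weights A w r) | r. is_run A w r}"

definition L_F :: "(nat \<Rightarrow> letter) \<Rightarrow> real" where
  "L_F w = (if infinite {i. w i = La} then 0 else 1)"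

end

theory Submission
  imports Defs
begin

text \<open>
  (1), (2): an automaton waits in a state of weight 0, guesses (by a fair coin) a point after which
  only b's occur, and from then on earns weight 1 per b; a wrong guess leads to a sink of weight 0.
  L_pos never exceeds L_max, and the optimal run has a prefix of positive probability all of whose
  continuations attain the same average, so both semantics give L_F.

  (3): suppose an almost-sure automaton A realised L_F. On a word that ends in b's, almost every
  run has average weight above 1/2. Hence for every state q that can be reached before such a
  tail, the probability that the run from q on a long b-block averages at most 3/8 somewhere late
  in the block tends to 0; choosing one threshold for all (finitely many) such states, these
  probabilities can be made summable. Now build a word of b-blocks separated by single a's, each
  block much longer than everything before it. By Borel--Cantelli, almost surely all late blocks
  have average above 3/8, and this forces the running average above 1/4 at all late times, so
  L_as A w \<ge> 1/4. But w contains infinitely many a's, so L_F w = 0.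
\<close>

section \<open>Runs generated by independent random choices\<close>

lemma space_run_space [simp]: "space run_space = UNIV"
  by (auto simp: run_space_def space_PiM)

definition cylinder :: "nat \<Rightarrow> (nat \<Rightarrow> nat) \<Rightarrow> (nat \<Rightarrow> nat) set" where
  "cylinder n r = {x \<in> space run_space. \<forall>i\<le>n. x i = r i}"

lemma cylinder_in_sets [measurable]: "cylinder n r \<in> sets run_space"
  unfolding cylinder_def run_space_def by measurable

lemma measure_run_space_eqI:
  assumes sets_M: "sets M = sets run_space" and sets_N: "sets N = sets run_space"
    and "finite_measure M"
    and cyl_eq: "\<And>n r. emeasure M (cylinder n r) = emeasure N (cylinder n r)"
  shows "M = N"
proof (rule measure_eqI_PiM_infinite[where I=UNIV and M="\<lambda>_. count_space UNIV"])
  show "sets M = sets (PiM UNIV (\<lambda>_. count_space UNIV))"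
    "sets N = sets (PiM UNIV (\<lambda>_. count_space UNIV))"
    using sets_M sets_N by (simp_all add: run_space_def)
  show "finite_measure M" by fact
  fix A J assume J: "finite (J::nat set)" "J \<subseteq> UNIV"
  obtain n where n: "J \<subseteq> {..n}" using J(1) finite_nat_iff_bounded_le by auto
  define R where "R = {r \<in> PiE {..n} (\<lambda>_. UNIV::nat set). \<forall>j\<in>J. r j \<in> A j}"
  have emb_eq: "prod_emb UNIV (\<lambda>_. count_space UNIV) J (PiE J A) = (\<Union>r\<in>R. cylinder n r)"
  proof (intro set_eqI iffI)
    fix x assume x: "x \<in> prod_emb UNIV (\<lambda>_. count_space UNIV) J (PiE J A)"
    have "restrict x {..n} \<in> R" using x n unfolding R_def prod_emb_def by (auto simp: PiE_iff)
    moreover have "x \<in> cylinder n (restrict x {..n})" by (simp add: cylinder_def)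
    ultimately show "x \<in> (\<Union>r\<in>R. cylinder n r)" by blast
  next
    fix x assume "x \<in> (\<Union>r\<in>R. cylinder n r)"
    then show "x \<in> prod_emb UNIV (\<lambda>_. count_space UNIV) J (PiE J A)"
      using n unfolding R_def prod_emb_def cylinder_def by (auto simp: PiE_iff subset_eq)
  qed
  have "countable R"
    unfolding R_def by (rule countable_subset[OF _ countable_PiE[of "{..n}" "\<lambda>_. UNIV"]]) auto
  moreover have "disjoint_family_on (cylinder n) R"
    unfolding disjoint_family_on_def
  proof (intro ballI impI)
    fix r s assume rs: "r \<in> R" "s \<in> R" "r \<noteq> s"
    then obtain i where i: "r i \<noteq> s i" by auto
    moreover from rs i have "i \<le> n" unfolding R_def by (metis (mono_tags) PiE_arb atMost_iff mem_Collect_eq)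
    ultimately show "cylinder n r \<inter> cylinder n s = {}" unfolding cylinder_def by auto
  qed
  ultimately have "emeasure M (\<Union>r\<in>R. cylinder n r) = emeasure N (\<Union>r\<in>R. cylinder n r)"
    using sets_M sets_N cyl_eq by (simp add: emeasure_UN_countable)
  then show "emeasure M (prod_emb UNIV (\<lambda>_. count_space UNIV) J (PiE J A)) =
       emeasure N (prod_emb UNIV (\<lambda>_. count_space UNIV) J (PiE J A))"
    by (simp add: emb_eq)
qed

text \<open>A run is generated from an i.i.d. sequence of random choices: an initial state, then at
  each step a table giving a successor for every letter and state. Realising the run measure
  as the image of this product space makes disjoint time windows independent.\<close>
type_synonym choice = "nat \<times> (letter \<times> nat \<Rightarrow> nat)"

definition choice_pmf :: "pwa \<Rightarrow> choice pmf" where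
  "choice_pmf A = pair_pmf (init A) (Pi_pmf (UNIV \<times> states A) 0 (\<lambda>(\<sigma>, q). trans A q \<sigma>))"

abbreviation choice_space :: "pwa \<Rightarrow> (nat \<Rightarrow> choice) measure" where
  "choice_space A \<equiv> PiM UNIV (\<lambda>_. measure_pmf (choice_pmf A))"

fun run_of :: "(nat \<Rightarrow> letter) \<Rightarrow> (nat \<Rightarrow> choice) \<Rightarrow> nat \<Rightarrow> nat" where
  "run_of w Y 0 = fst (Y 0)"
| "run_of w Y (Suc i) = snd (Y (Suc i)) (w i, run_of w Y i)"

lemma finite_UNIV_letter [simp]: "finite (UNIV :: letter set)"
proof -
  have "(UNIV :: letter set) = {La, Lb}" using letter.exhaust by auto
  then show ?thesis by (metis finite.emptyI finite_insert)
qed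

lemma space_choice_space [simp]: "space (choice_space A) = UNIV"
  by (simp add: space_PiM)

lemma prob_space_choice_space: "prob_space (choice_space A)"
  by (rule prob_space_PiM) (simp add: prob_space_measure_pmf)

lemma measurable_choice_coordinate [measurable]:
  "(\<lambda>Y. f (Y k)) \<in> measurable (choice_space A) (count_space UNIV)"
  by (rule measurable_compose[OF measurable_component_singleton]) auto

lemma measurable_run_of_at [measurable]:
  "(\<lambda>Y. run_of w Y i) \<in> measurable (choice_space A) (count_space UNIV)"
proof (induction i)
  case (Suc i)
  have "(\<lambda>Y. (\<lambda>q Y. snd (Y (Suc i)) (w i, q)) (run_of w Y i) Y)
          \<in> measurable (choice_space A) (count_space UNIV)"
    by (rule measurable_compose_countable[OF _ Suc]) simp
  then show ?case by simp
qed simp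

lemma measurable_run_of: "run_of w \<in> measurable (choice_space A) run_space"
  unfolding run_space_def by (rule measurable_PiM_single') auto

definition cylinder_choices ::
    "(nat \<Rightarrow> letter) \<Rightarrow> (nat \<Rightarrow> nat) \<Rightarrow> nat \<Rightarrow> choice set" where
  "cylinder_choices w r i = (case i of 0 \<Rightarrow> {d. fst d = r 0} | Suc j \<Rightarrow> {d. snd d (w j, r j) = r (Suc j)})"

lemma run_of_eq_prefix_iff:
  "(\<forall>i\<le>n. run_of w Y i = r i) \<longleftrightarrow> (\<forall>i\<le>n. Y i \<in> cylinder_choices w r i)"
proof (induction n)
  case (Suc n)
  then show ?case
    by (auto simp: le_Suc_eq cylinder_choices_def)
qed (simp add: cylinder_choices_def)

lemma run_of_vimage_cylinder:
  "run_of w -` cylinder n r \<inter> space (choice_space A) =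
     prod_emb UNIV (\<lambda>_. measure_pmf (choice_pmf A)) {..n} (PiE {..n} (cylinder_choices w r))"
  using run_of_eq_prefix_iff[of n w _ r]
  by (auto simp: cylinder_def prod_emb_def space_PiM PiE_iff)

text \<open>The transition probability at step j, extended by a Dirac transition to state 0 from
  states outside the automaton (matching the default value of the transition table).\<close>
definition step_prob :: "pwa \<Rightarrow> (nat \<Rightarrow> letter) \<Rightarrow> (nat \<Rightarrow> nat) \<Rightarrow> nat \<Rightarrow> real" where
  "step_prob A w r j =
     (if r j \<in> states A then pmf (trans A (r j) (w j)) (r (Suc j)) else if r (Suc j) = 0 then 1 else 0)"

lemma emeasure_cylinder_choices_0:
  "emeasure (measure_pmf (choice_pmf A)) (cylinder_choices w r 0) = pmf (init A) (r 0)"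
proof -
  have "cylinder_choices w r 0 = fst -` {r 0}" by (auto simp: cylinder_choices_def)
  then have "emeasure (measure_pmf (choice_pmf A)) (cylinder_choices w r 0) =
      emeasure (measure_pmf (map_pmf fst (choice_pmf A))) {r 0}"
    by simp
  then show ?thesis by (simp add: choice_pmf_def map_fst_pair_pmf emeasure_pmf_single)
qed

lemma emeasure_cylinder_choices_Suc:
  assumes "finite (states A)"
  shows "emeasure (measure_pmf (choice_pmf A)) (cylinder_choices w r (Suc j)) = step_prob A w r j"
proof -
  have "cylinder_choices w r (Suc j) = (\<lambda>d. snd d (w j, r j)) -` {r (Suc j)}"
    by (auto simp: cylinder_choices_def)
  then have "emeasure (measure_pmf (choice_pmf A)) (cylinder_choices w r (Suc j)) =
      emeasure (measure_pmf (map_pmf (\<lambda>f. f (w j, r j)) (map_pmf snd (choice_pmf A)))) {r (Suc j)}"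
    by (simp add: vimage_def)
  also have "map_pmf snd (choice_pmf A) = Pi_pmf (UNIV \<times> states A) 0 (\<lambda>(\<sigma>, q). trans A q \<sigma>)"
    by (simp add: choice_pmf_def map_snd_pair_pmf)
  also have "map_pmf (\<lambda>f. f (w j, r j)) \<dots> =
      (if r j \<in> states A then trans A (r j) (w j) else return_pmf 0)"
    using assms by (subst Pi_pmf_component) auto
  finally show ?thesis by (auto simp: emeasure_pmf_single step_prob_def)
qed

lemma prefix_prob_Suc:
  "prefix_prob A w (Suc n) r = prefix_prob A w n r * pmf (trans A (r n) (w n)) (r (Suc n))"
  by (simp add: prefix_prob_def)

lemma prefix_prob_nonzero_in_states:
  assumes "wf_pwa A" and "prefix_prob A w n r \<noteq> 0"
  shows "r n \<in> states A"
  using assms(2)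
proof (induction n)
  case 0
  then show ?case using assms(1) by (auto simp: prefix_prob_def wf_pwa_def set_pmf_eq)
next
  case (Suc n)
  then show ?case using assms(1) by (auto simp: prefix_prob_Suc wf_pwa_def set_pmf_eq)
qed

lemma prefix_prob_eq_step_prob:
  assumes "wf_pwa A"
  shows "pmf (init A) (r 0) * (\<Prod>j<n. step_prob A w r j) = prefix_prob A w n r"
proof (induction n)
  case (Suc n)
  show ?case
  proof (cases "r n \<in> states A")
    case True
    then show ?thesis using Suc by (simp add: prefix_prob_Suc step_prob_def mult.assoc[symmetric])
  next
    case False
    then have "prefix_prob A w n r = 0" using prefix_prob_nonzero_in_states[OF assms] by blast
    then show ?thesis using Suc by (simp add: prefix_prob_Suc mult.assoc[symmetric])
  qed
qed (simp add: prefix_prob_def)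

lemma emeasure_distr_run_of_cylinder:
  assumes wf: "wf_pwa A"
  shows "emeasure (distr (choice_space A) run_space (run_of w)) (cylinder n r) = prefix_prob A w n r"
proof -
  have fin: "finite (states A)" using wf by (simp add: wf_pwa_def)
  have "emeasure (distr (choice_space A) run_space (run_of w)) (cylinder n r) =
      emeasure (choice_space A) (run_of w -` cylinder n r \<inter> space (choice_space A))"
    by (rule emeasure_distr[OF measurable_run_of cylinder_in_sets])
  also have "\<dots> = (\<Prod>i\<le>n. emeasure (measure_pmf (choice_pmf A)) (cylinder_choices w r i))"
    unfolding run_of_vimage_cylinder
    by (rule emeasure_PiM_emb) (auto simp: prob_space_measure_pmf)
  also have "\<dots> = emeasure (measure_pmf (choice_pmf A)) (cylinder_choices w r 0) *
      (\<Prod>j<n. emeasure (measure_pmf (choice_pmf A)) (cylinder_choices w r (Suc j)))"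
    by (simp add: lessThan_Suc_atMost[symmetric] prod.lessThan_Suc_shift del: prod.lessThan_Suc)
  also have "\<dots> = ennreal (pmf (init A) (r 0) * (\<Prod>j<n. step_prob A w r j))"
    by (simp add: emeasure_cylinder_choices_0 emeasure_cylinder_choices_Suc[OF fin]
        prod_ennreal ennreal_mult prod_nonneg step_prob_def)
  finally show ?thesis by (simp add: prefix_prob_eq_step_prob[OF wf])
qed

lemma run_measure_eq_distr_run_of:
  assumes wf: "wf_pwa A"
  shows "run_measure A w = distr (choice_space A) run_space (run_of w)"
  unfolding run_measure_def
proof (rule the_equality)
  let ?N = "distr (choice_space A) run_space (run_of w)"
  have "prob_space ?N"
    by (rule prob_space.prob_space_distr[OF prob_space_choice_space measurable_run_of])
  then show "sets ?N = sets run_space \<and> prob_space ?N \<and>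
    (\<forall>n r. emeasure ?N {x \<in> space run_space. \<forall>i\<le>n. x i = r i} = ennreal (prefix_prob A w n r))"
    using emeasure_distr_run_of_cylinder[OF wf] by (simp add: cylinder_def)
  fix M assume M: "sets M = sets run_space \<and> prob_space M \<and>
    (\<forall>n r. emeasure M {x \<in> space run_space. \<forall>i\<le>n. x i = r i} = ennreal (prefix_prob A w n r))"
  show "M = ?N"
  proof (rule measure_run_space_eqI)
    show "finite_measure M" using M prob_space.finite_measure by blast
    show "emeasure M (cylinder n r) = emeasure ?N (cylinder n r)" for n r
      using M emeasure_distr_run_of_cylinder[OF wf] by (simp add: cylinder_def)
  qed (use M in auto)
qed

definition choices_in_support :: "pwa \<Rightarrow> (nat \<Rightarrow> choice) \<Rightarrow> bool" where
  "choices_in_support A Y \<longleftrightarrow> (\<forall>i. fst (Y i) \<in> set_pmf (init A) \<and>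
     (\<forall>\<sigma> q. q \<in> states A \<longrightarrow> snd (Y i) (\<sigma>, q) \<in> set_pmf (trans A q \<sigma>)))"

lemma AE_choices_in_support:
  assumes "wf_pwa A"
  shows "AE Y in choice_space A. choices_in_support A Y"
proof -
  have fin: "finite ((UNIV::letter set) \<times> states A)"
    using assms by (simp add: wf_pwa_def)
  have "AE Y in choice_space A. \<forall>i. Y i \<in> set_pmf (choice_pmf A)"
    by (subst AE_all_countable)
       (auto intro!: AE_PiM_component simp: prob_space_measure_pmf AE_measure_pmf)
  then show ?thesis
    by eventually_elim
       (simp add: choices_in_support_def choice_pmf_def set_Pi_pmf[OF fin] PiE_dflt_def mem_Times_iff)
qed

lemma run_of_in_states:
  "wf_pwa A \<Longrightarrow> choices_in_support A Y \<Longrightarrow> run_of w Y i \<in> states A"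
  by (induction i) (auto simp: choices_in_support_def wf_pwa_def; blast)+

lemma is_run_run_of:
  "wf_pwa A \<Longrightarrow> choices_in_support A Y \<Longrightarrow> is_run A w (run_of w Y)"
  using run_of_in_states[of A Y w] by (auto simp: is_run_def choices_in_support_def pmf_positive)

lemma measurable_run_space_pair:
  fixes g :: "nat \<Rightarrow> nat \<Rightarrow> real"
  shows "(\<lambda>r. g (r i) (r j)) \<in> borel_measurable run_space"
proof -
  have coord: "(\<lambda>r. r k) \<in> measurable run_space (count_space UNIV)" for k
    unfolding run_space_def by (rule measurable_component_singleton) auto
  have "(\<lambda>r. (\<lambda>q r. (\<lambda>q' r. g q q') (r j) r) (r i) r) \<in> borel_measurable run_space"
    by (rule measurable_compose_countable[OF _ coord], rule measurable_compose_countable[OF _ coord]) auto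
  then show ?thesis by simp
qed

lemma measurable_LimAvg_weights [measurable]:
  "(\<lambda>r. LimAvg (weights A w r)) \<in> borel_measurable run_space"
proof -
  have [measurable]: "(\<lambda>r. real_of_rat (weights A w r i)) \<in> borel_measurable run_space" for i
    unfolding weights_def by (rule measurable_run_space_pair)
  show ?thesis unfolding LimAvg_def of_rat_sum by measurable
qed

lemma measurable_is_run [measurable]: "Measurable.pred run_space (is_run A w)"
proof -
  have [measurable]: "(\<lambda>r. pmf (trans A (r i) (w i)) (r (Suc i))) \<in> borel_measurable run_space"
    "(\<lambda>r. pmf (init A) (r 0)) \<in> borel_measurable run_space" for i
    using measurable_run_space_pair[of "\<lambda>q q'. pmf (trans A q (w i)) q'" i "Suc i"]
      measurable_run_space_pair[of "\<lambda>q _. pmf (init A) q" 0 0] by simp_all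
  show ?thesis unfolding is_run_def by measurable
qed

lemma sets_run_measure:
  "wf_pwa A \<Longrightarrow> sets (run_measure A w) = sets run_space"
  by (simp add: run_measure_eq_distr_run_of)

lemma space_run_measure [simp]: "wf_pwa A \<Longrightarrow> space (run_measure A w) = UNIV"
  by (simp add: run_measure_eq_distr_run_of)

lemma emeasure_run_measure_cylinder:
  "wf_pwa A \<Longrightarrow> emeasure (run_measure A w) (cylinder n r) = prefix_prob A w n r"
  by (simp add: run_measure_eq_distr_run_of emeasure_distr_run_of_cylinder)

lemma AE_is_run:
  assumes wf: "wf_pwa A"
  shows "AE r in run_measure A w. is_run A w r"
proof -
  have "AE Y in choice_space A. is_run A w (run_of w Y)"
    using AE_choices_in_support[OF wf] by eventually_elim (rule is_run_run_of[OF wf])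
  then show ?thesis
    unfolding run_measure_eq_distr_run_of[OF wf] using measurable_is_run[of A w]
    by (subst AE_distr_iff) (auto intro: measurable_run_of simp: Measurable.pred_def)
qed

lemma LimAvg_ge_in_sets_run_measure:
  assumes "wf_pwa A"
  shows "{r \<in> space (run_measure A w). LimAvg (weights A w r) \<ge> \<eta>} \<in> sets (run_measure A w)"
proof -
  have "{r \<in> space run_space. LimAvg (weights A w r) \<ge> \<eta>} \<in> sets run_space" by measurable
  then show ?thesis using assms by (simp add: sets_run_measure)
qed

lemma emeasure_LimAvg_ge_choice_space:
  assumes wf: "wf_pwa A"
  shows "emeasure (run_measure A w) {r \<in> space (run_measure A w). LimAvg (weights A w r) \<ge> \<eta>} =
    emeasure (choice_space A) {Y \<in> space (choice_space A). LimAvg (weights A w (run_of w Y)) \<ge> \<eta>}"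
proof -
  have "{r \<in> space run_space. LimAvg (weights A w r) \<ge> \<eta>} \<in> sets run_space" by measurable
  from emeasure_distr[OF measurable_run_of this, of A w] show ?thesis
    unfolding run_measure_eq_distr_run_of[OF wf] by (simp add: vimage_def)
qed

lemma is_run_prefix_prob_pos: "is_run A w r \<Longrightarrow> prefix_prob A w n r > 0"
  unfolding prefix_prob_def is_run_def by (auto intro!: mult_pos_pos prod_pos)

lemma L_pos_le_L_max:
  assumes wf: "wf_pwa A"
  shows "L_pos A w \<le> L_max A w"
  unfolding L_pos_def
proof (rule Sup_least, clarify)
  let ?M = "run_measure A w"
  fix \<eta> :: real
  define E where "E = {r \<in> space ?M. LimAvg (weights A w r) \<ge> ereal \<eta>}"
  assume "emeasure ?M {r \<in> space ?M. LimAvg (weights A w r) \<ge> ereal \<eta>} > 0"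
  then have pos: "emeasure ?M E > 0" by (simp add: E_def)
  have "\<exists>r\<in>E. is_run A w r"
  proof (rule ccontr)
    assume no_run: "\<not> (\<exists>r\<in>E. is_run A w r)"
    from AE_is_run[OF wf] have "AE r in ?M. r \<in> E \<longrightarrow> r \<in> {}"
      by eventually_elim (use no_run in blast)
    then have "emeasure ?M E \<le> emeasure ?M {}" by (rule emeasure_mono_AE) simp
    then show False using pos by simp
  qed
  then show "ereal \<eta> \<le> L_max A w"
    unfolding L_max_def E_def by (force intro: Sup_upper2)
qed

lemma L_pos_ge_of_cylinder:
  assumes wf: "wf_pwa A" and r0: "is_run A w r0"
    and tail: "\<And>r. is_run A w r \<Longrightarrow> r \<in> cylinder n r0 \<Longrightarrow> ereal c \<le> LimAvg (weights A w r)"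
  shows "ereal c \<le> L_pos A w"
proof -
  let ?M = "run_measure A w"
  let ?E = "{r \<in> space ?M. LimAvg (weights A w r) \<ge> ereal c}"
  have "AE r in ?M. r \<in> cylinder n r0 \<longrightarrow> r \<in> ?E"
    using AE_is_run[OF wf] by eventually_elim (simp add: wf tail)
  then have "emeasure ?M (cylinder n r0) \<le> emeasure ?M ?E"
    by (rule emeasure_mono_AE[OF _ LimAvg_ge_in_sets_run_measure[OF wf]])
  moreover have "emeasure ?M (cylinder n r0) > 0"
    using emeasure_run_measure_cylinder[OF wf] is_run_prefix_prob_pos[OF r0] by simp
  ultimately have "emeasure ?M ?E > 0" by simp
  then show ?thesis unfolding L_pos_def by (intro Sup_upper) auto
qed

section \<open>Limit averages\<close>

lemma LimAvg_eventually_const: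
  assumes ev: "\<forall>i\<ge>N. v i = c"
  shows "LimAvg v = ereal (real_of_rat c)"
proof -
  define u where "u i = real_of_rat (v i)" for i
  define a where "a = (\<Sum>i<N. u i) - real N * real_of_rat c"
  have avg_eq: "real_of_rat (\<Sum>i<n. v i) / real n = a / real n + real_of_rat c" if n: "n > N" for n
  proof -
    have "real_of_rat (\<Sum>i<n. v i) = (\<Sum>i<N. u i) + (\<Sum>i\<in>{N..<n}. u i)"
      using n by (simp add: u_def of_rat_sum atLeast0LessThan[symmetric] sum.atLeastLessThan_concat)
    also have "(\<Sum>i\<in>{N..<n}. u i) = (\<Sum>i\<in>{N..<n}. real_of_rat c)"
      using ev by (intro sum.cong) (auto simp: u_def)
    finally show ?thesis using n by (simp add: a_def field_simps of_nat_diff)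
  qed
  have "(\<lambda>n. a / real n + real_of_rat c) \<longlonglongrightarrow> 0 + real_of_rat c"
    by (intro tendsto_add lim_const_over_n tendsto_const)
  moreover have "eventually (\<lambda>n. a / real n + real_of_rat c = real_of_rat (\<Sum>i<n. v i) / real n) sequentially"
    using avg_eq by (auto simp: eventually_sequentially intro!: exI[of _ "Suc N"])
  ultimately have "(\<lambda>n. real_of_rat (\<Sum>i<n. v i) / real n) \<longlonglongrightarrow> real_of_rat c"
    using Lim_transform_eventually by fastforce
  then show ?thesis
    unfolding LimAvg_def by (intro lim_imp_Liminf tendsto_ereal) auto
qed

lemma LimAvg_bounds:
  assumes "\<And>i. 0 \<le> v i \<and> v i \<le> 1"
  shows "0 \<le> LimAvg v \<and> LimAvg v \<le> 1"
proof -
  have avg: "0 \<le> real_of_rat (\<Sum>i<n. v i) / real n \<and> real_of_rat (\<Sum>i<n. v i) / real n \<le> 1" for n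
  proof -
    have "0 \<le> (\<Sum>i<n. v i)" "(\<Sum>i<n. v i) \<le> of_nat n"
      using assms sum_mono[of "{..<n}" v "\<lambda>_. 1"] by (auto intro: sum_nonneg)
    then have "0 \<le> real_of_rat (\<Sum>i<n. v i)" "real_of_rat (\<Sum>i<n. v i) \<le> real n"
      by (simp_all add: zero_le_of_rat_iff) (metis of_rat_less_eq of_rat_of_nat_eq)
    then show ?thesis by (cases "n = 0") (auto simp: field_simps)
  qed
  have "0 \<le> LimAvg v" unfolding LimAvg_def by (rule Liminf_bounded) (use avg in auto)
  moreover have "LimAvg v \<le> Liminf sequentially (\<lambda>n. (1::ereal))"
    unfolding LimAvg_def by (rule Liminf_mono) (use avg in auto)
  ultimately show ?thesis using Liminf_const[of sequentially "1::ereal"] by simp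
qed

lemma finite_La_iff_eventually_Lb: "finite {i. (w :: nat \<Rightarrow> letter) i = La} \<longleftrightarrow> (\<exists>K. \<forall>i>K. w i = Lb)"
proof
  assume "finite {i. w i = La}"
  then obtain K where "{i. w i = La} \<subseteq> {..K}" using finite_nat_iff_bounded_le[THEN iffD1] by meson
  then have "\<forall>i>K. w i \<noteq> La" by auto
  then have "\<forall>i>K. w i = Lb" using letter.exhaust by blast
  then show "\<exists>K. \<forall>i>K. w i = Lb" ..
next
  assume "\<exists>K. \<forall>i>K. w i = Lb"
  then obtain K where "\<forall>i>K. w i = Lb" ..
  then have "{i. w i = La} \<subseteq> {..K}" by (auto simp: not_less[symmetric])
  then show "finite {i. w i = La}" by (rule finite_subset) simp
qed

section \<open>The guessing automaton\<close>

text \<open>State 0 waits, flipping a coin at each step; moving to state 1 is a guess that only b's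
  follow, and reading an a in state 1 falsifies the guess and leads to the sink 2. Only the
  b-loop at state 1 has weight 1.\<close>
definition guess_aut :: pwa where
  "guess_aut = \<lparr>states = {0, 1, 2}, init = return_pmf 0,
     trans = (\<lambda>q \<sigma>. if q = 0 then pmf_of_set {0, 1}
                    else if q = 1 \<and> \<sigma> = Lb then return_pmf 1 else return_pmf 2),
     weight = (\<lambda>q \<sigma> q'. if q = 1 \<and> \<sigma> = Lb \<and> q' = 1 then 1 else 0)\<rparr>"

lemma guess_aut_simps:
  "states guess_aut = {0, 1, 2}" "init guess_aut = return_pmf 0"
  "trans guess_aut q \<sigma> = (if q = 0 then pmf_of_set {0, 1}
     else if q = 1 \<and> \<sigma> = Lb then return_pmf 1 else return_pmf 2)"
  by (simp_all add: guess_aut_def)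

lemma wf_guess_aut: "wf_pwa guess_aut"
  by (auto simp: wf_pwa_def guess_aut_def)

lemma weights_guess_aut:
  "weights guess_aut w r i = (if r i = 1 \<and> w i = Lb \<and> r (Suc i) = 1 then 1 else 0)"
  by (simp add: weights_def guess_aut_def)

lemma LimAvg_guess_aut_bounds:
  "0 \<le> LimAvg (weights guess_aut w r) \<and> LimAvg (weights guess_aut w r) \<le> 1"
  by (rule LimAvg_bounds) (simp add: weights_guess_aut)

lemma pmf_coin: "pmf (pmf_of_set {0::nat, 1}) q = (if q \<in> {0, 1} then 1/2 else 0)"
  by (simp add: pmf_of_set)

lemma pmf_trans_guess_aut_pos_iff:
  "0 < pmf (trans guess_aut q \<sigma>) q' \<longleftrightarrow>
     (q = 0 \<longrightarrow> q' \<in> {0, 1}) \<and> (q = 1 \<longrightarrow> q' = (if \<sigma> = Lb then 1 else 2)) \<and> (q \<notin> {0, 1} \<longrightarrow> q' = 2)"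
  by (cases "q = 0"; cases "q = 1"; cases \<sigma>) (auto simp: guess_aut_simps pmf_coin indicator_def)

lemma is_run_guess_aut_iff:
  "is_run guess_aut w r \<longleftrightarrow> r 0 = 0 \<and> (\<forall>i.
     (r i = 0 \<longrightarrow> r (Suc i) \<in> {0, 1}) \<and>
     (r i = 1 \<longrightarrow> r (Suc i) = (if w i = Lb then 1 else 2)) \<and>
     (r i \<notin> {0, 1} \<longrightarrow> r (Suc i) = 2))"
  by (simp add: is_run_def guess_aut_simps(2) pmf_trans_guess_aut_pos_iff indicator_def)

lemma guess_aut_run_step:
  assumes "is_run guess_aut w r"
  shows "r i = 0 \<Longrightarrow> r (Suc i) \<in> {0, 1}"
    and "r i = 1 \<Longrightarrow> r (Suc i) = (if w i = Lb then 1 else 2)"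
    and "r i \<notin> {0, 1} \<Longrightarrow> r (Suc i) = 2"
  using assms unfolding is_run_guess_aut_iff by blast+

lemma guess_aut_run_stays_nonzero:
  assumes r: "is_run guess_aut w r" and "r i \<noteq> 0"
  shows "i \<le> k \<Longrightarrow> r k \<noteq> 0"
proof (induction k)
  case (Suc k)
  show ?case
  proof (cases "i = Suc k")
    case False
    with Suc have "r k \<noteq> 0" by (simp add: le_Suc_eq)
    then show ?thesis using guess_aut_run_step(2,3)[OF r, of k] by (cases "r k = 1") auto
  qed (use assms in simp)
qed (use assms in simp)

lemma guess_aut_run_stays_sink:
  assumes r: "is_run guess_aut w r" and "r i = 2"
  shows "i \<le> k \<Longrightarrow> r k = 2"
proof (induction k)
  case (Suc k)
  then show ?case using guess_aut_run_step(3)[OF r, of k] assms(2) by (cases "i = Suc k") (auto simp: le_Suc_eq)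
qed (use assms in simp)

lemma LimAvg_guess_aut_infinite_La:
  assumes r: "is_run guess_aut w r" and inf: "infinite {i. w i = La}"
  shows "LimAvg (weights guess_aut w r) = 0"
proof -
  obtain N where "\<forall>i\<ge>N. weights guess_aut w r i = 0"
  proof (cases "\<forall>k. r k = 0")
    case False
    then obtain k0 where k0: "r k0 \<noteq> 0" by auto
    obtain j where j: "j \<ge> k0" "w j = La" using inf unfolding infinite_nat_iff_unbounded_le by auto
    have "r j \<noteq> 0" by (rule guess_aut_run_stays_nonzero[OF r k0 j(1)])
    then have "r (Suc j) = 2" using guess_aut_run_step(2,3)[OF r, of j] j(2) by (cases "r j = 1") auto
    then have "\<forall>i\<ge>Suc j. weights guess_aut w r i = 0"
      using guess_aut_run_stays_sink[OF r] by (auto simp: weights_guess_aut)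
    then show ?thesis using that by blast
  qed (use that in \<open>auto simp: weights_guess_aut\<close>)
  then have "LimAvg (weights guess_aut w r) = ereal (real_of_rat 0)"
    by (rule LimAvg_eventually_const)
  then show ?thesis by (simp add: zero_ereal_def)
qed

lemma LimAvg_guess_aut_committed:
  assumes r: "is_run guess_aut w r" and K: "\<forall>i>K. w i = Lb" and "r (Suc K) = 1"
  shows "LimAvg (weights guess_aut w r) = 1"
proof -
  have "r i = 1" if "i \<ge> Suc K" for i
    using that
  proof (induction i)
    case (Suc i)
    then show ?case
      using guess_aut_run_step(2)[OF r, of i] K assms(3) by (cases "i = K") (auto simp: le_Suc_eq)
  qed simp
  then have "\<forall>i\<ge>Suc K. weights guess_aut w r i = 1"
    using K by (auto simp: weights_guess_aut)
  then have "LimAvg (weights guess_aut w r) = ereal (real_of_rat 1)"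
    by (rule LimAvg_eventually_const)
  then show ?thesis by (simp add: one_ereal_def)
qed

definition guess_run :: "nat \<Rightarrow> nat \<Rightarrow> nat" where
  "guess_run K i = (if i \<le> K then 0 else 1)"

lemma is_run_guess_run:
  assumes "\<forall>i>K. w i = Lb"
  shows "is_run guess_aut w (guess_run K)"
  using assms by (auto simp: is_run_guess_aut_iff guess_run_def)

lemma L_max_guess_aut: "L_max guess_aut w = ereal (L_F w)"
proof (cases "finite {i. w i = La}")
  case True
  then obtain K where K: "\<forall>i>K. w i = Lb" using finite_La_iff_eventually_Lb by blast
  have "L_max guess_aut w \<le> 1"
    unfolding L_max_def using LimAvg_guess_aut_bounds by (auto intro: Sup_least)
  moreover have "LimAvg (weights guess_aut w (guess_run K)) = 1"
    by (rule LimAvg_guess_aut_committed[OF is_run_guess_run[OF K] K]) (simp add: guess_run_def)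
  then have "1 \<le> L_max guess_aut w"
    unfolding L_max_def using is_run_guess_run[OF K] by (intro Sup_upper) auto
  ultimately show ?thesis using True by (simp add: L_F_def)
next
  case False
  have r0: "is_run guess_aut w (\<lambda>_. 0)" by (simp add: is_run_guess_aut_iff)
  have "{LimAvg (weights guess_aut w r) | r. is_run guess_aut w r} = {0}"
  proof (intro set_eqI iffI)
    fix x assume "x \<in> {LimAvg (weights guess_aut w r) | r. is_run guess_aut w r}"
    then show "x \<in> {0}" using LimAvg_guess_aut_infinite_La[OF _ False] by auto
  qed (use LimAvg_guess_aut_infinite_La[OF r0 False] r0 in auto)
  then show ?thesis using False by (simp add: L_max_def L_F_def)
qed

lemma L_pos_guess_aut: "L_pos guess_aut w = ereal (L_F w)"
proof (rule antisym)
  show "L_pos guess_aut w \<le> ereal (L_F w)"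
    using L_pos_le_L_max[OF wf_guess_aut] L_max_guess_aut by simp
  show "ereal (L_F w) \<le> L_pos guess_aut w"
  proof (cases "finite {i. w i = La}")
    case True
    then obtain K where K: "\<forall>i>K. w i = Lb" using finite_La_iff_eventually_Lb by blast
    have "ereal 1 \<le> L_pos guess_aut w"
    proof (rule L_pos_ge_of_cylinder[OF wf_guess_aut is_run_guess_run[OF K]])
      fix r assume "is_run guess_aut w r" "r \<in> cylinder (Suc K) (guess_run K)"
      then show "ereal 1 \<le> LimAvg (weights guess_aut w r)"
        using LimAvg_guess_aut_committed[OF _ K] by (simp add: cylinder_def guess_run_def)
    qed
    then show ?thesis using True by (simp add: L_F_def)
  next
    case False
    have "is_run guess_aut w (\<lambda>_. 0)" by (simp add: is_run_guess_aut_iff)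
    then have "ereal 0 \<le> L_pos guess_aut w"
      by (rule L_pos_ge_of_cylinder[OF wf_guess_aut, where n=0])
         (use LimAvg_guess_aut_bounds in \<open>simp add: zero_ereal_def[symmetric]\<close>)
    then show ?thesis using False by (simp add: L_F_def)
  qed
qed

section \<open>Run averages on blocks of b\<close>

definition real_weight :: "pwa \<Rightarrow> nat \<Rightarrow> letter \<Rightarrow> nat \<Rightarrow> real" where
  "real_weight A q \<sigma> q' = real_of_rat (weight A q \<sigma> q')"

definition weight_sum :: "pwa \<Rightarrow> (nat \<Rightarrow> letter) \<Rightarrow> (nat \<Rightarrow> choice) \<Rightarrow> nat \<Rightarrow> real" where
  "weight_sum A w Y n = (\<Sum>i<n. real_weight A (run_of w Y i) (w i) (run_of w Y (Suc i)))"

lemma LimAvg_weights_run_of: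
  "LimAvg (weights A w (run_of w Y)) = liminf (\<lambda>n. ereal (weight_sum A w Y n / real n))"
  by (simp add: LimAvg_def weight_sum_def weights_def real_weight_def of_rat_sum)

text \<open>The run on the word b b b ... from state q, driven by the transition tables Z 0, Z 1, \<dots>
  (the initial-state components of Z are ignored).\<close>
fun b_run :: "nat \<Rightarrow> (nat \<Rightarrow> choice) \<Rightarrow> nat \<Rightarrow> nat" where
  "b_run q Z 0 = q"
| "b_run q Z (Suc j) = snd (Z j) (Lb, b_run q Z j)"

definition b_weight_sum :: "pwa \<Rightarrow> nat \<Rightarrow> (nat \<Rightarrow> choice) \<Rightarrow> nat \<Rightarrow> real" where
  "b_weight_sum A q Z m = (\<Sum>j<m. real_weight A (b_run q Z j) Lb (b_run q Z (Suc j)))"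

text \<open>The choices that drive the run after time L; the step from time L uses Y (Suc L).\<close>
definition choice_tail :: "nat \<Rightarrow> (nat \<Rightarrow> 'a) \<Rightarrow> nat \<Rightarrow> 'a" where
  "choice_tail L Y = (\<lambda>j. Y (j + Suc L))"

lemma run_of_b_block:
  assumes "\<forall>j<m. w (L + j) = Lb" and "j \<le> m"
  shows "run_of w Y (L + j) = b_run (run_of w Y L) (choice_tail L Y) j"
  using assms(2)
proof (induction j)
  case (Suc j)
  then have "w (L + j) = Lb" using assms(1) by auto
  then show ?case using Suc by (simp add: choice_tail_def add.commute)
qed simp

lemma weight_sum_b_block:
  assumes "\<forall>j<m. w (L + j) = Lb"
  shows "weight_sum A w Y (L + m) = weight_sum A w Y L + b_weight_sum A (run_of w Y L) (choice_tail L Y) m"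
  using assms
proof (induction m)
  case (Suc m)
  then have "w (L + m) = Lb" by simp
  moreover have "run_of w Y (L + m) = b_run (run_of w Y L) (choice_tail L Y) m"
    "run_of w Y (Suc (L + m)) = b_run (run_of w Y L) (choice_tail L Y) (Suc m)"
    using run_of_b_block[OF Suc.prems, of m] run_of_b_block[OF Suc.prems, of "Suc m"] by simp_all
  ultimately show ?case using Suc by (simp add: weight_sum_def b_weight_sum_def)
qed (simp add: b_weight_sum_def)

lemma run_of_cong_choices: "(\<forall>i\<le>L. Y i = Y' i) \<Longrightarrow> k \<le> L \<Longrightarrow> run_of w Y k = run_of w Y' k"
  by (induction k) auto

lemma run_of_cong_word: "(\<forall>i<L. w i = w' i) \<Longrightarrow> k \<le> L \<Longrightarrow> run_of w Y k = run_of w' Y k"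
  by (induction k) auto

lemma measurable_choice_tail [measurable]: "choice_tail L \<in> measurable (choice_space A) (choice_space A)"
  unfolding choice_tail_def by (rule measurable_PiM_single') (auto intro: measurable_component_singleton)

lemma measurable_b_run [measurable]: "(\<lambda>Z. b_run q Z j) \<in> measurable (choice_space A) (count_space UNIV)"
proof (induction j)
  case (Suc j)
  have "(\<lambda>Z. (\<lambda>q' Z. snd (Z j) (Lb, q')) (b_run q Z j) Z) \<in> measurable (choice_space A) (count_space UNIV)"
    by (rule measurable_compose_countable[OF _ Suc]) simp
  then show ?case by simp
qed simp

lemma measurable_b_weight_sum [measurable]: "(\<lambda>Z. b_weight_sum A q Z m) \<in> borel_measurable (choice_space A)"
proof -
  have "(\<lambda>Z. (\<lambda>q Z. (\<lambda>q' Z. real_weight A q Lb q') (b_run q0 Z (Suc j)) Z) (b_run q0 Z j) Z)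
          \<in> borel_measurable (choice_space A)" for q0 j
    by (rule measurable_compose_countable[OF _ measurable_b_run],
        rule measurable_compose_countable[OF _ measurable_b_run]) simp
  then show ?thesis unfolding b_weight_sum_def by (intro borel_measurable_sum) simp
qed

lemma measurable_b_weight_sum_choice_tail [measurable]:
  "(\<lambda>Y. b_weight_sum A (run_of w Y L) (choice_tail L Y) m) \<in> borel_measurable (choice_space A)"
proof -
  have "(\<lambda>Y. (\<lambda>q Y. b_weight_sum A q (choice_tail L Y) m) (run_of w Y L) Y) \<in> borel_measurable (choice_space A)"
    by (rule measurable_compose_countable[OF _ measurable_run_of_at]) simp
  then show ?thesis by simp
qed

lemma measurable_LimAvg_run_of [measurable]:
  "(\<lambda>Y. LimAvg (weights A w (run_of w Y))) \<in> borel_measurable (choice_space A)"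
  by (rule measurable_compose[OF measurable_run_of measurable_LimAvg_weights])

lemma emeasure_choice_tail_indep:
  assumes C: "C \<in> sets (choice_space A)" and E: "E \<in> sets (choice_space A)"
    and head: "\<And>Y Z. comb_seq (Suc L) Y Z \<in> C \<longleftrightarrow> Y \<in> C"
  shows "emeasure (choice_space A) {Y \<in> space (choice_space A). Y \<in> C \<and> choice_tail L Y \<in> E} =
    emeasure (choice_space A) C * emeasure (choice_space A) E"
proof -
  interpret sequence_space "measure_pmf (choice_pmf A)"
    by unfold_locales (simp add: prob_space_measure_pmf)
  let ?X = "{Y \<in> space (choice_space A). Y \<in> C \<and> choice_tail L Y \<in> E}"
  let ?f = "\<lambda>(Y, Z). comb_seq (Suc L) Y Z"
  have X: "?X \<in> sets (choice_space A)" using C E by measurable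
  have tail: "choice_tail L (comb_seq (Suc L) Y Z) = Z" for Y Z :: "nat \<Rightarrow> choice"
    by (simp add: choice_tail_def comb_seq_add fun_eq_iff del: add_Suc_right)
  have "emeasure (choice_space A) ?X = emeasure (distr (choice_space A \<Otimes>\<^sub>M choice_space A) (choice_space A) ?f) ?X"
    by (simp add: PiM_comb_seq)
  also have "\<dots> = emeasure (choice_space A \<Otimes>\<^sub>M choice_space A) (?f -` ?X \<inter> space (choice_space A \<Otimes>\<^sub>M choice_space A))"
    by (rule emeasure_distr[OF measurable_comb_seq X])
  also have "?f -` ?X \<inter> space (choice_space A \<Otimes>\<^sub>M choice_space A) = C \<times> E"
    by (auto simp: space_pair_measure tail head)
  also have "emeasure (choice_space A \<Otimes>\<^sub>M choice_space A) (C \<times> E) = emeasure (choice_space A) C * emeasure (choice_space A) E"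
    by (rule P.emeasure_pair_measure_Times[OF C E])
  finally show ?thesis .
qed

lemma emeasure_choice_tail_vimage:
  assumes "E \<in> sets (choice_space A)"
  shows "emeasure (choice_space A) {Y \<in> space (choice_space A). choice_tail L Y \<in> E} = emeasure (choice_space A) E"
proof -
  interpret prob_space "choice_space A" by (rule prob_space_choice_space)
  have "emeasure (choice_space A) {Y \<in> space (choice_space A). Y \<in> space (choice_space A) \<and> choice_tail L Y \<in> E} =
      emeasure (choice_space A) (space (choice_space A)) * emeasure (choice_space A) E"
    by (rule emeasure_choice_tail_indep[OF sets.top assms]) simp
  then show ?thesis using emeasure_space_1 by simp
qed

section \<open>States reached before a tail of b\<close>

definition low_b_avg :: "pwa \<Rightarrow> nat \<Rightarrow> nat \<Rightarrow> (nat \<Rightarrow> choice) set" where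
  "low_b_avg A q N = {Z \<in> space (choice_space A). \<exists>m\<ge>N. b_weight_sum A q Z m \<le> 3/8 * real m}"

definition b_tail_states :: "pwa \<Rightarrow> nat set" where
  "b_tail_states A = {q. \<exists>w L. (\<forall>i\<ge>L. w i = Lb) \<and>
     emeasure (choice_space A) {Y \<in> space (choice_space A). run_of w Y L = q} > 0}"

lemma low_b_avg_in_sets [measurable]: "low_b_avg A q N \<in> sets (choice_space A)"
  unfolding low_b_avg_def by measurable

lemma low_b_avg_antimono: "N \<le> N' \<Longrightarrow> low_b_avg A q N' \<subseteq> low_b_avg A q N"
  unfolding low_b_avg_def using le_trans by blast

lemma choice_tail_vimage_in_sets:
  assumes "E \<in> sets (choice_space A)"
  shows "{Y \<in> space (choice_space A). choice_tail L Y \<in> E} \<in> sets (choice_space A)"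
  using assms by measurable

lemma choice_tail_in_low_b_avg_in_sets [measurable]:
  "{Y \<in> space (choice_space A). choice_tail L Y \<in> low_b_avg A (run_of w Y L) N} \<in> sets (choice_space A)"
proof -
  have "{Y \<in> space (choice_space A). \<exists>m\<ge>N. b_weight_sum A (run_of w Y L) (choice_tail L Y) m \<le> 3/8 * real m}
      \<in> sets (choice_space A)"
    by measurable
  then show ?thesis by (simp add: low_b_avg_def)
qed

lemma run_of_eq_in_sets [measurable]:
  "{Y \<in> space (choice_space A). run_of w Y L = q} \<in> sets (choice_space A)"
  by measurable

lemma L_F_eventually_Lb:
  assumes "\<forall>i\<ge>L. w i = Lb"
  shows "L_F w = 1"
proof -
  have "\<forall>i>L. w i = Lb" using assms by simp
  then show ?thesis using finite_La_iff_eventually_Lb by (auto simp: L_F_def)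
qed

lemma AE_LimAvg_gt_half_of_L_as:
  assumes wf: "wf_pwa A" and "L_as A w = 1"
  shows "\<exists>\<eta>>1/2. AE Y in choice_space A. LimAvg (weights A w (run_of w Y)) \<ge> ereal \<eta>"
proof -
  interpret prob_space "choice_space A" by (rule prob_space_choice_space)
  have "ereal (1/2) < L_as A w" using assms(2) by simp
  then obtain \<eta> where \<eta>: "1/2 < \<eta>" and full: "emeasure (run_measure A w)
      {r \<in> space (run_measure A w). LimAvg (weights A w r) \<ge> ereal \<eta>} = 1"
    unfolding L_as_def less_Sup_iff by auto
  have "AE Y in choice_space A. LimAvg (weights A w (run_of w Y)) \<ge> ereal \<eta>"
    using full unfolding emeasure_LimAvg_ge_choice_space[OF wf]
    by (subst AE_iff_emeasure_eq_1) auto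
  with \<eta> show ?thesis by blast
qed

lemma choice_tail_notin_INT_low_b_avg:
  assumes w: "\<forall>i\<ge>L. w i = Lb" and \<eta>: "1/2 < \<eta>"
    and avg: "ereal \<eta> \<le> LimAvg (weights A w (run_of w Y))"
  shows "choice_tail L Y \<notin> (\<Inter>N. low_b_avg A (run_of w Y L) N)"
proof
  let ?q = "run_of w Y L"
  have "ereal (7/16) < liminf (\<lambda>n. ereal (weight_sum A w Y n / real n))"
    using avg \<eta> by (simp add: LimAvg_weights_run_of) (rule less_le_trans[rotated], assumption, simp)
  then have "eventually (\<lambda>n. ereal (7/16) < ereal (weight_sum A w Y n / real n)) sequentially"
    by (rule less_LiminfD)
  then obtain N0 where N0: "\<And>n. n \<ge> N0 \<Longrightarrow> 7/16 < weight_sum A w Y n / real n"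
    by (auto simp: eventually_sequentially)
  define N where "N = max (Suc N0) (nat \<lceil>16 * \<bar>weight_sum A w Y L\<bar>\<rceil> + 1)"
  assume "choice_tail L Y \<in> (\<Inter>N. low_b_avg A ?q N)"
  then obtain m where m: "m \<ge> N" "b_weight_sum A ?q (choice_tail L Y) m \<le> 3/8 * real m"
    by (auto simp: low_b_avg_def)
  have "\<forall>j<m. w (L + j) = Lb" using w by simp
  then have split: "weight_sum A w Y (L + m) = weight_sum A w Y L + b_weight_sum A ?q (choice_tail L Y) m"
    by (rule weight_sum_b_block)
  have n: "L + m \<ge> N0" "real (L + m) > 0" using m(1) by (auto simp: N_def)
  have "7/16 < weight_sum A w Y (L + m) / real (L + m)" by (rule N0[OF n(1)])
  then have "7/16 * real (L + m) < weight_sum A w Y (L + m)"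
    using n(2) by (simp add: field_simps)
  moreover have "real m \<ge> 16 * \<bar>weight_sum A w Y L\<bar> + 1"
    using m(1) unfolding N_def by linarith
  ultimately show False
    using m(2) split abs_ge_self[of "weight_sum A w Y L"] by (simp add: algebra_simps)
qed

text \<open>The event that the run sits in q at time L depends only on the choices up to time L, and
  the event of low averages on the subsequent b-block only on the later ones; the two are
  independent, and their intersection is null because L_as forces averages above 1/2.\<close>
lemma emeasure_INT_low_b_avg:
  assumes wf: "wf_pwa A" and L_as_eq: "\<forall>w. L_as A w = ereal (L_F w)" and q: "q \<in> b_tail_states A"
  shows "emeasure (choice_space A) (\<Inter>N. low_b_avg A q N) = 0"
proof -
  obtain w L where w: "\<forall>i\<ge>L. w i = Lb"
    and pos: "emeasure (choice_space A) {Y \<in> space (choice_space A). run_of w Y L = q} > 0"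
    using q by (auto simp: b_tail_states_def)
  define C where "C = {Y \<in> space (choice_space A). run_of w Y L = q}"
  have C_sets: "C \<in> sets (choice_space A)" unfolding C_def by (rule run_of_eq_in_sets)
  obtain \<eta> where \<eta>: "\<eta> > 1/2"
    and AE_\<eta>: "AE Y in choice_space A. LimAvg (weights A w (run_of w Y)) \<ge> ereal \<eta>"
    using AE_LimAvg_gt_half_of_L_as[OF wf] L_as_eq L_F_eventually_Lb[OF w] by fastforce
  let ?X = "{Y \<in> space (choice_space A). Y \<in> C \<and> choice_tail L Y \<in> (\<Inter>N. low_b_avg A q N)}"
  have "AE Y in choice_space A. Y \<in> ?X \<longrightarrow> Y \<in> {}"
    using AE_\<eta> by eventually_elim (use choice_tail_notin_INT_low_b_avg[OF w \<eta>] in \<open>auto simp: C_def\<close>)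
  then have "emeasure (choice_space A) ?X \<le> emeasure (choice_space A) {}"
    by (rule emeasure_mono_AE) simp
  then have X_null: "emeasure (choice_space A) ?X = 0" by simp
  have head: "comb_seq (Suc L) Y Z \<in> C \<longleftrightarrow> Y \<in> C" for Y Z
  proof -
    have "run_of w (comb_seq (Suc L) Y Z) L = run_of w Y L"
      by (rule run_of_cong_choices[of L]) (auto simp: comb_seq_less)
    then show ?thesis by (simp add: C_def)
  qed
  have "(\<Inter>N. low_b_avg A q N) \<in> sets (choice_space A)" by measurable
  from emeasure_choice_tail_indep[OF C_sets this head] X_null
  have "emeasure (choice_space A) C * emeasure (choice_space A) (\<Inter>N. low_b_avg A q N) = 0"
    by simp
  then show ?thesis using pos by (auto simp: C_def)
qed

lemma b_tail_states_subset:
  assumes wf: "wf_pwa A"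
  shows "b_tail_states A \<subseteq> states A"
proof
  fix q assume "q \<in> b_tail_states A"
  then obtain w L where pos: "emeasure (choice_space A) {Y \<in> space (choice_space A). run_of w Y L = q} > 0"
    by (auto simp: b_tail_states_def)
  show "q \<in> states A"
  proof (rule ccontr)
    assume q: "q \<notin> states A"
    have "AE Y in choice_space A. Y \<in> {Y \<in> space (choice_space A). run_of w Y L = q} \<longrightarrow> Y \<in> {}"
      using AE_choices_in_support[OF wf] by eventually_elim (use run_of_in_states[OF wf] q in blast)
    then have "emeasure (choice_space A) {Y \<in> space (choice_space A). run_of w Y L = q} \<le> emeasure (choice_space A) {}"
      by (rule emeasure_mono_AE) simp
    then show False using pos by simp
  qed
qed

lemma finite_b_tail_states:
  assumes "wf_pwa A"
  shows "finite (b_tail_states A)"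
  using b_tail_states_subset[OF assms] assms by (auto simp: wf_pwa_def intro: finite_subset)

lemma AE_run_of_in_b_tail_states: "AE Y in choice_space A. run_of w Y L \<in> b_tail_states A"
proof -
  define v where "v i = (if i < L then w i else Lb)" for i
  have v: "\<forall>i\<ge>L. v i = Lb" by (simp add: v_def)
  have run_eq: "run_of v Y L = run_of w Y L" for Y
    by (rule run_of_cong_word[of L]) (auto simp: v_def)
  have "AE Y in choice_space A. run_of v Y L \<noteq> q" if q: "q \<notin> b_tail_states A" for q
  proof -
    have "emeasure (choice_space A) {Y \<in> space (choice_space A). run_of v Y L = q} = 0"
      using q v unfolding b_tail_states_def by auto
    then show ?thesis by (subst AE_iff_measurable[OF run_of_eq_in_sets]) auto
  qed
  then have "AE Y in choice_space A. \<forall>q. q \<notin> b_tail_states A \<longrightarrow> run_of v Y L \<noteq> q"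
    by (subst AE_all_countable) auto
  then show ?thesis by eventually_elim (auto simp: run_eq)
qed

text \<open>By continuity from above and finiteness of the tail states, one threshold N k serves all
  tail states with error at most 2^(-k).\<close>
lemma low_b_avg_uniformly_small:
  assumes wf: "wf_pwa A" and L_as_eq: "\<forall>w. L_as A w = ereal (L_F w)"
  obtains N where "\<And>k q. q \<in> b_tail_states A \<Longrightarrow> emeasure (choice_space A) (low_b_avg A q (N k)) \<le> ennreal ((1/2)^k)"
proof -
  interpret prob_space "choice_space A" by (rule prob_space_choice_space)
  have "\<exists>N. \<forall>q\<in>b_tail_states A. emeasure (choice_space A) (low_b_avg A q N) \<le> ennreal ((1/2)^k)" for k
  proof -
    have "\<exists>N. emeasure (choice_space A) (low_b_avg A q N) < ennreal ((1/2)^k)"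
      if q: "q \<in> b_tail_states A" for q
    proof -
      have "(INF N. emeasure (choice_space A) (low_b_avg A q N)) = emeasure (choice_space A) (\<Inter>N. low_b_avg A q N)"
        by (rule INF_emeasure_decseq) (auto simp: decseq_def low_b_avg_antimono)
      also have "\<dots> = 0" by (rule emeasure_INT_low_b_avg[OF wf L_as_eq q])
      finally have "(INF N. emeasure (choice_space A) (low_b_avg A q N)) < ennreal ((1/2)^k)" by simp
      then show ?thesis by (simp add: INF_less_iff)
    qed
    then obtain f where f: "\<And>q. q \<in> b_tail_states A \<Longrightarrow> emeasure (choice_space A) (low_b_avg A q (f q)) < ennreal ((1/2)^k)"
      by metis
    define N where "N = Max (f ` b_tail_states A)"
    have "emeasure (choice_space A) (low_b_avg A q N) \<le> ennreal ((1/2)^k)" if q: "q \<in> b_tail_states A" for q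
    proof -
      have "f q \<le> N" using q finite_b_tail_states[OF wf] by (simp add: N_def)
      then have "emeasure (choice_space A) (low_b_avg A q N) \<le> emeasure (choice_space A) (low_b_avg A q (f q))"
        by (intro emeasure_mono low_b_avg_antimono low_b_avg_in_sets)
      then show ?thesis using f[OF q] by simp
    qed
    then show ?thesis by blast
  qed
  then show ?thesis using that by metis
qed

lemma AE_eventually_not_low_b_avg:
  assumes wf: "wf_pwa A" and L_as_eq: "\<forall>w. L_as A w = ereal (L_F w)"
  obtains N where "\<And>w start. AE Y in choice_space A.
    eventually (\<lambda>k. choice_tail (start k) Y \<notin> low_b_avg A (run_of w Y (start k)) (N k)) sequentially"
proof -
  interpret prob_space "choice_space A" by (rule prob_space_choice_space)
  obtain N where N: "\<And>k q. q \<in> b_tail_states A \<Longrightarrow> emeasure (choice_space A) (low_b_avg A q (N k)) \<le> ennreal ((1/2)^k)"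
    using low_b_avg_uniformly_small[OF wf L_as_eq] by blast
  have "AE Y in choice_space A.
      eventually (\<lambda>k. choice_tail (start k) Y \<notin> low_b_avg A (run_of w Y (start k)) (N k)) sequentially" for w start
  proof -
    define Bad where "Bad k = {Y \<in> space (choice_space A). choice_tail (start k) Y \<in> low_b_avg A (run_of w Y (start k)) (N k)}" for k
    have Bad_sets: "Bad k \<in> sets (choice_space A)" for k
      unfolding Bad_def by (rule choice_tail_in_low_b_avg_in_sets)
    define U where "U k = (\<Union>q\<in>b_tail_states A. {Y \<in> space (choice_space A). choice_tail (start k) Y \<in> low_b_avg A q (N k)})" for k
    have bound: "measure (choice_space A) (Bad k) \<le> real (card (b_tail_states A)) * (1/2)^k" for k
    proof -
      have "AE Y in choice_space A. Y \<in> Bad k \<longrightarrow> Y \<in> U k"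
        using AE_run_of_in_b_tail_states[where A=A and w=w and L="start k"] by eventually_elim (auto simp: Bad_def U_def)
      moreover have "U k \<in> sets (choice_space A)"
        unfolding U_def by (intro sets.finite_UN finite_b_tail_states[OF wf] ballI choice_tail_vimage_in_sets low_b_avg_in_sets)
      ultimately have "emeasure (choice_space A) (Bad k) \<le> emeasure (choice_space A) (U k)"
        by (rule emeasure_mono_AE)
      also have "\<dots> \<le> (\<Sum>q\<in>b_tail_states A. emeasure (choice_space A) {Y \<in> space (choice_space A). choice_tail (start k) Y \<in> low_b_avg A q (N k)})"
        unfolding U_def
        by (intro emeasure_subadditive_finite[OF finite_b_tail_states[OF wf]])
           (use choice_tail_vimage_in_sets[OF low_b_avg_in_sets] in auto)
      also have "\<dots> = (\<Sum>q\<in>b_tail_states A. emeasure (choice_space A) (low_b_avg A q (N k)))"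
        by (intro sum.cong refl emeasure_choice_tail_vimage low_b_avg_in_sets)
      also have "\<dots> \<le> (\<Sum>q\<in>b_tail_states A. ennreal ((1/2)^k))"
        by (intro sum_mono N)
      also have "\<dots> = ennreal (real (card (b_tail_states A)) * (1/2)^k)"
        by (simp add: ennreal_of_nat_eq_real_of_nat ennreal_mult)
      finally show ?thesis by (simp add: emeasure_eq_measure ennreal_le_iff)
    qed
    have summable: "summable (\<lambda>k. measure (choice_space A) (Bad k))"
    proof (rule summable_comparison_test')
      show "summable (\<lambda>k. real (card (b_tail_states A)) * (1/2)^k)"
        by (rule summable_mult) (rule summable_geometric, simp)
      show "norm (measure (choice_space A) (Bad k)) \<le> real (card (b_tail_states A)) * (1/2)^k" for k
        using bound[of k] by simp
    qed
    have "AE Y in choice_space A. eventually (\<lambda>k. Y \<in> space (choice_space A) - Bad k) sequentially"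
      by (rule borel_cantelli_AE1[OF Bad_sets _ summable]) (simp add: less_top[symmetric])
    then show ?thesis by eventually_elim (auto simp: Bad_def)
  qed
  then show ?thesis using that by blast
qed

section \<open>Words of fast-growing blocks\<close>

locale block_schedule =
  fixes start len :: "nat \<Rightarrow> nat"
  assumes start_0: "start 0 = 0"
    and start_Suc: "start (Suc k) = start k + len k + 1"
begin

lemma start_mono: "k \<le> k' \<Longrightarrow> start k \<le> start k'"
  by (rule lift_Suc_mono_le[of start]) (simp_all add: start_Suc)

lemma block_end_less_start: "k < k' \<Longrightarrow> start k + len k < start k'"
  using start_mono[of "Suc k" k'] by (simp add: start_Suc)

lemma block_cover: "\<exists>k. start k \<le> n \<and> n \<le> start k + len k"
proof (induction n)
  case (Suc n)
  then obtain k where k: "start k \<le> n" "n \<le> start k + len k" by blast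
  show ?case
  proof (cases "Suc n \<le> start k + len k")
    case True
    then show ?thesis using k by (intro exI[of _ k]) simp
  next
    case False
    then have "Suc n = start (Suc k)" using k by (simp add: start_Suc)
    then show ?thesis by (intro exI[of _ "Suc k"]) simp
  qed
qed (use start_0 in auto)

definition block_word :: "nat \<Rightarrow> letter" where
  "block_word i = (if \<exists>k. i = start k + len k then La else Lb)"

lemma block_word_in_block:
  assumes "j < len k"
  shows "block_word (start k + j) = Lb"
proof -
  have "start k + j \<noteq> start k' + len k'" for k'
    using block_end_less_start[of k' k] block_end_less_start[of k k'] start_mono[of k k'] assms
    by (cases k' k rule: linorder_cases) auto
  then show ?thesis by (simp add: block_word_def)
qed

lemma infinite_La_block_word: "infinite {i. block_word i = La}"
proof -
  have "strict_mono (\<lambda>k. start k + len k)"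
    by (rule strict_monoI) (use block_end_less_start in fastforce)
  then have "infinite (range (\<lambda>k. start k + len k))"
    by (intro range_inj_infinite strict_mono_imp_inj_on)
  moreover have "{i. block_word i = La} = range (\<lambda>k. start k + len k)"
    by (auto simp: block_word_def)
  ultimately show ?thesis by simp
qed

end

lemma abs_sum_lessThan_diff_le:
  fixes g :: "nat \<Rightarrow> real"
  assumes "\<And>i. \<bar>g i\<bar> \<le> W"
  shows "\<bar>(\<Sum>i<a + m. g i) - (\<Sum>i<a. g i)\<bar> \<le> W * real m"
proof (induction m)
  case (Suc m)
  have "\<bar>g (a + m)\<bar> \<le> W" by (rule assms)
  then show ?case using Suc by (simp add: algebra_simps)
qed simp

text \<open>The blocks grow so fast that a block on which the running sum gains at least 3/8 per
  step (from the threshold on) outweighs everything before it, which is what keeps the average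
  above 1/4 at every time, not only at the ends of blocks.\<close>
locale fast_block_schedule = block_schedule +
  fixes W :: real and threshold :: "nat \<Rightarrow> nat"
  assumes W_nonneg: "0 \<le> W"
    and threshold_le_len: "threshold k \<le> len k"
    and len_large: "(8 * W + 2) * (real (start k) + 1 + real (threshold (Suc k))) \<le> real (len k)"
begin

lemma quarter_bound_in_block:
  fixes g :: "nat \<Rightarrow> real"
  assumes bounded: "\<And>i. \<bar>g i\<bar> \<le> W"
    and gain: "\<And>k m. K0 \<le> k \<Longrightarrow> threshold k \<le> m \<Longrightarrow> m \<le> len k \<Longrightarrow>
      3/8 * real m < (\<Sum>i<start k + m. g i) - (\<Sum>i<start k. g i)"
    and k: "K0 < k" and m: "m \<le> len k"
  shows "real (start k + m) / 4 \<le> (\<Sum>i<start k + m. g i)"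
proof -
  define S where "S n = (\<Sum>i<n. g i)" for n
  have incr: "\<bar>S (a + m) - S a\<bar> \<le> W * real m" for a m
    unfolding S_def by (rule abs_sum_lessThan_diff_le[OF bounded])
  obtain k' where k': "k = Suc k'" "K0 \<le> k'" using k by (cases k) auto
  define X where "X = real (len k')"
  define \<Lambda> where "\<Lambda> = real (start k') + 1"
  have start_k: "real (start k) = X + \<Lambda>" using k' by (simp add: start_Suc X_def \<Lambda>_def)
  have "S (start k' + len k') - S (start k') > 3/8 * X"
    using gain[of k' "len k'"] k' threshold_le_len by (simp add: S_def X_def)
  moreover have "S (start k') \<ge> - (W * real (start k'))"
    using incr[of 0 "start k'"] by (simp add: S_def)
  moreover have "S (start k) - S (start k' + len k') \<ge> - W"
    using incr[of "start k' + len k'" 1] k' by (simp add: start_Suc)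
  ultimately have S_start: "S (start k) \<ge> 3/8 * X - W * \<Lambda>"
    by (simp add: \<Lambda>_def algebra_simps)
  have X_large: "X \<ge> 8 * (W * \<Lambda>) + 2 * \<Lambda> + 8 * (W * real (threshold k)) + 2 * real (threshold k)"
    using len_large[of k'] k' by (simp add: X_def \<Lambda>_def algebra_simps)
  have WN: "W * \<Lambda> \<ge> 0" "W * real (threshold k) \<ge> 0" using W_nonneg by (auto simp: \<Lambda>_def)
  show ?thesis
  proof (cases "threshold k \<le> m")
    case True
    have "S (start k + m) - S (start k) > 3/8 * real m" using gain k' True m by (simp add: S_def)
    then show ?thesis using S_start X_large WN start_k by (simp add: S_def)
  next
    case False
    have "S (start k + m) - S (start k) \<ge> - (W * real m)" using incr[of "start k" m] by linarith
    moreover have "W * real m \<le> W * real (threshold k)" using False W_nonneg by (intro mult_left_mono) auto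
    ultimately show ?thesis using S_start X_large WN start_k False by (simp add: S_def)
  qed
qed

lemma sum_ge_quarter_eventually:
  fixes g :: "nat \<Rightarrow> real"
  assumes bounded: "\<And>i. \<bar>g i\<bar> \<le> W"
    and gain: "\<And>k m. K0 \<le> k \<Longrightarrow> threshold k \<le> m \<Longrightarrow> m \<le> len k \<Longrightarrow>
      3/8 * real m < (\<Sum>i<start k + m. g i) - (\<Sum>i<start k. g i)"
    and n: "start (Suc K0) \<le> n"
  shows "real n / 4 \<le> (\<Sum>i<n. g i)"
proof -
  obtain k where k: "start k \<le> n" "n \<le> start k + len k" using block_cover by blast
  have "K0 < k"
  proof (rule ccontr)
    assume "\<not> K0 < k"
    then have "start k + len k < start (Suc K0)" by (intro block_end_less_start) simp
    then show False using k n by simp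
  qed
  from quarter_bound_in_block[OF bounded gain this, of "n - start k"] k show ?thesis by simp
qed

end

lemma fast_block_schedule_exists:
  assumes "0 \<le> W"
  shows "\<exists>start len. fast_block_schedule start len W threshold"
proof -
  define c where "c = nat \<lceil>8 * W + 2\<rceil>"
  define len_from where "len_from k s = max (threshold k) (c * (s + 1 + threshold (Suc k)))" for k s
  define start where "start = rec_nat 0 (\<lambda>k s. s + len_from k s + 1)"
  define len where "len k = len_from k (start k)" for k
  have "(8 * W + 2) * (real (start k) + 1 + real (threshold (Suc k))) \<le> real (len k)" for k
  proof -
    have "(8 * W + 2) * (real (start k) + 1 + real (threshold (Suc k))) \<le>
        real c * (real (start k) + 1 + real (threshold (Suc k)))"
      unfolding c_def by (intro mult_right_mono real_nat_ceiling_ge) simp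
    also have "\<dots> = real (c * (start k + 1 + threshold (Suc k)))" by (simp add: algebra_simps)
    also have "\<dots> \<le> real (len k)" by (subst of_nat_le_iff) (simp add: len_def len_from_def)
    finally show ?thesis .
  qed
  then have "fast_block_schedule start len W threshold"
    using assms by unfold_locales (simp_all add: start_def len_def len_from_def)
  then show ?thesis by blast
qed

lemma real_weight_bounded:
  assumes "wf_pwa A"
  obtains W where "0 \<le> W" "\<And>q \<sigma> q'. q \<in> states A \<Longrightarrow> q' \<in> states A \<Longrightarrow> \<bar>real_weight A q \<sigma> q'\<bar> \<le> W"
proof -
  let ?T = "(\<lambda>(q, \<sigma>, q'). \<bar>real_weight A q \<sigma> q'\<bar>) ` (states A \<times> UNIV \<times> states A)"
  have fin: "finite ?T" using assms by (simp add: wf_pwa_def)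
  show ?thesis
  proof (rule that)
    show "0 \<le> Max (insert 0 ?T)" using fin by simp
    show "\<bar>real_weight A q \<sigma> q'\<bar> \<le> Max (insert 0 ?T)" if "q \<in> states A" "q' \<in> states A" for q \<sigma> q'
      using fin that by (intro Max_ge) force+
  qed
qed

lemma (in fast_block_schedule) LimAvg_block_word_ge_quarter:
  assumes wf: "wf_pwa A"
    and W_bound: "\<And>q \<sigma> q'. q \<in> states A \<Longrightarrow> q' \<in> states A \<Longrightarrow> \<bar>real_weight A q \<sigma> q'\<bar> \<le> W"
    and support: "choices_in_support A Y"
    and no_low: "eventually (\<lambda>k. choice_tail (start k) Y \<notin> low_b_avg A (run_of block_word Y (start k)) (threshold k)) sequentially"
  shows "ereal (1/4) \<le> LimAvg (weights A block_word (run_of block_word Y))"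
proof -
  obtain K0 where K0: "\<And>k. K0 \<le> k \<Longrightarrow> choice_tail (start k) Y \<notin> low_b_avg A (run_of block_word Y (start k)) (threshold k)"
    using no_low by (auto simp: eventually_sequentially)
  let ?S = "weight_sum A block_word Y"
  have gain: "3/8 * real m < ?S (start k + m) - ?S (start k)"
    if "K0 \<le> k" "threshold k \<le> m" "m \<le> len k" for k m
  proof -
    have "\<forall>j<m. block_word (start k + j) = Lb" using that block_word_in_block by simp
    then have "?S (start k + m) = ?S (start k) + b_weight_sum A (run_of block_word Y (start k)) (choice_tail (start k) Y) m"
      by (rule weight_sum_b_block)
    then show ?thesis using K0[OF that(1)] that(2) by (auto simp: low_b_avg_def)
  qed
  define g where "g i = real_weight A (run_of block_word Y i) (block_word i) (run_of block_word Y (Suc i))" for i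
  have S_eq: "?S = (\<lambda>n. \<Sum>i<n. g i)" by (simp add: fun_eq_iff weight_sum_def g_def)
  have "\<bar>g i\<bar> \<le> W" for i unfolding g_def by (intro W_bound run_of_in_states[OF wf support])
  from sum_ge_quarter_eventually[OF this gain[unfolded S_eq]]
  have "real n / 4 \<le> ?S n" if "start (Suc K0) \<le> n" for n
    using that by (simp add: S_eq)
  then have "eventually (\<lambda>n. ereal (1/4) \<le> ereal (?S n / real n)) sequentially"
    unfolding eventually_sequentially
    by (intro exI[of _ "max 1 (start (Suc K0))"]) (auto simp: field_simps)
  then show ?thesis unfolding LimAvg_weights_run_of by (rule Liminf_bounded)
qed

theorem L_F_not_almost_sure_expressible: "\<not> (\<exists>A. wf_pwa A \<and> (\<forall>w. L_as A w = ereal (L_F w)))"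
proof
  assume "\<exists>A. wf_pwa A \<and> (\<forall>w. L_as A w = ereal (L_F w))"
  then obtain A where wf: "wf_pwa A" and L_as_eq: "\<forall>w. L_as A w = ereal (L_F w)" by blast
  interpret prob_space "choice_space A" by (rule prob_space_choice_space)
  obtain threshold where no_low: "\<And>w start. AE Y in choice_space A.
      eventually (\<lambda>k. choice_tail (start k) Y \<notin> low_b_avg A (run_of w Y (start k)) (threshold k)) sequentially"
    using AE_eventually_not_low_b_avg[OF wf L_as_eq] by blast
  obtain W where W: "0 \<le> W" "\<And>q \<sigma> q'. q \<in> states A \<Longrightarrow> q' \<in> states A \<Longrightarrow> \<bar>real_weight A q \<sigma> q'\<bar> \<le> W"
    using real_weight_bounded[OF wf] by blast
  obtain start len where "fast_block_schedule start len W threshold"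
    using fast_block_schedule_exists[OF W(1)] by blast
  then interpret fast_block_schedule start len W threshold .
  have "emeasure (run_measure A block_word)
      {r \<in> space (run_measure A block_word). LimAvg (weights A block_word r) \<ge> ereal (1/4)} = 1"
    unfolding emeasure_LimAvg_ge_choice_space[OF wf]
  proof (rule emeasure_eq_1_AE)
    show "AE Y in choice_space A. Y \<in> {Y \<in> space (choice_space A).
        ereal (1/4) \<le> LimAvg (weights A block_word (run_of block_word Y))}"
      using no_low[of start block_word] AE_choices_in_support[OF wf]
      by eventually_elim (simp add: LimAvg_block_word_ge_quarter[OF wf W(2)])
  qed measurable
  then have "ereal (1/4) \<le> L_as A block_word" unfolding L_as_def by (intro Sup_upper) auto
  moreover have "L_F block_word = 0" using infinite_La_block_word by (simp add: L_F_def)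
  ultimately show False using L_as_eq by simp
qed

theorem lemma2:
  shows "(\<exists>A. wf_pwa A \<and> (\<forall>w. L_max A w = ereal (L_F w))) \<and>
         (\<exists>A. wf_pwa A \<and> (\<forall>w. L_pos A w = ereal (L_F w))) \<and>
         \<not> (\<exists>A. wf_pwa A \<and> (\<forall>w. L_as A w = ereal (L_F w)))"
  using wf_guess_aut L_max_guess_aut L_pos_guess_aut L_F_not_almost_sure_expressible by blast

end
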